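(* Let $(V,c)$ be a braided vector space, i.e. $V$ a finite-dimensional complex vector space and $c\in GL(V\otimes V)$ satisfying $(c\otimes \mathrm{Id}_V)(\mathrm{Id}_V\otimes c)(c\otimes \mathrm{Id}_V)=(\mathrm{Id}_V\otimes c)(c\otimes \mathrm{Id}_V)(\mathrm{Id}_V\otimes c)$. Then $(V,c)$ is both of left group-type and of right group-type if and only if $(V,c)$ is diagonalizable.
   Context: $(V,c)$ is of left group-type if there are an ordered basis $[x_1,\ldots,x_n]$ of $V$ and $g_i\in GL(V)$ with $c(x_i\otimes z)=g_i(z)\otimes x_i$ for all $i$ and $z\in V$; it is of right group-type if there are an ordered basis $[x_1,\ldots,x_n]$ of $V$ and $g_j\in GL(V)$ with $c(z\otimes x_j)=x_j\otimes g_j(z)$ for all $j$ and $z\in V$ (the bases for left and right need not coincide). $(V,c)$ is of diagonal type with respect to a basis $[x_1,\ldots,x_n]$ if $c(x_i\otimes x_j)=q_{ij}\,x_j\otimes x_i$ for some scalars $q_{ij}$, and it is diagonalizable if there exists a basis of $V$ with respect to which it is of diagonal type. *)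

theory Defs
  imports "HOL-Analysis.Analysis"
begin

text \<open>V is modelled as complex^'n (finite-dimensional complex vector space of
dimension CARD('n)), V\<otimes>V as complex^('n\<times>'n), V\<otimes>V\<otimes>V as complex^('n\<times>'n\<times>'n).\<close>

definition tensor :: "complex^'n::finite \<Rightarrow> complex^'n \<Rightarrow> complex^('n \<times> 'n)" where
  "tensor x y = (\<chi> p. x $ fst p * y $ snd p)"

definition tensor_id :: "complex^('n::finite\<times>'n)^('n\<times>'n) \<Rightarrow> complex^('n\<times>'n\<times>'n)^('n\<times>'n\<times>'n)" where
  "tensor_id C = (\<chi> p q. C $ (fst p, fst (snd p)) $ (fst q, fst (snd q))
                     * (if snd (snd p) = snd (snd q) then 1 else 0))"

definition id_tensor :: "complex^('n::finite\<times>'n)^('n\<times>'n) \<Rightarrow> complex^('n\<times>'n\<times>'n)^('n\<times>'n\<times>'n)" where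
  "id_tensor C = (\<chi> p q. (if fst p = fst q then 1 else 0) * C $ snd p $ snd q)"

definition braided :: "complex^('n::finite\<times>'n)^('n\<times>'n) \<Rightarrow> bool" where
  "braided C \<longleftrightarrow> invertible C \<and>
     tensor_id C ** id_tensor C ** tensor_id C = id_tensor C ** tensor_id C ** id_tensor C"

text \<open>An ordered basis of V indexed by 'n (a basis of V has exactly CARD('n) elements).\<close>
definition ordered_basis :: "('n::finite \<Rightarrow> complex^'n) \<Rightarrow> bool" where
  "ordered_basis x \<longleftrightarrow> inj x \<and> vec.independent (range x) \<and> vec.span (range x) = UNIV"

definition left_group_type :: "complex^('n::finite\<times>'n)^('n\<times>'n) \<Rightarrow> bool" where
  "left_group_type C \<longleftrightarrow> (\<exists>x g. ordered_basis x \<and> (\<forall>i. invertible (g i :: complex^'n^'n)) \<and>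
     (\<forall>i z. C *v tensor (x i) z = tensor (g i *v z) (x i)))"

definition right_group_type :: "complex^('n::finite\<times>'n)^('n\<times>'n) \<Rightarrow> bool" where
  "right_group_type C \<longleftrightarrow> (\<exists>x g. ordered_basis x \<and> (\<forall>j. invertible (g j :: complex^'n^'n)) \<and>
     (\<forall>j z. C *v tensor z (x j) = tensor (x j) (g j *v z)))"

definition diagonal_type_wrt :: "complex^('n::finite\<times>'n)^('n\<times>'n) \<Rightarrow> ('n \<Rightarrow> complex^'n) \<Rightarrow> bool" where
  "diagonal_type_wrt C x \<longleftrightarrow> (\<exists>q :: 'n \<Rightarrow> 'n \<Rightarrow> complex.
     \<forall>i j. C *v tensor (x i) (x j) = q i j *s tensor (x j) (x i))"

definition diagonalizable_braiding :: "complex^('n::finite\<times>'n)^('n\<times>'n) \<Rightarrow> bool" where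
  "diagonalizable_braiding C \<longleftrightarrow> (\<exists>x. ordered_basis x \<and> diagonal_type_wrt C x)"

end

theory Submission
  imports Defs
begin

text \<open>If c is diagonal in a basis x, with c(x_i \<otimes> x_j) = q_ij x_j \<otimes> x_i, then c is of left
and right group-type with g_i and h_j diagonal in x; the q_ij are nonzero since c is invertible.

Conversely, let c be of left group-type for (x_i, g_i) and of right group-type for (y_j, h_j).
Computing c(x_i \<otimes> y_j) both ways shows that every y_j is a common eigenvector of the g_i, so
the g_i commute. The space V_k = left_braiding_space C (g k) of all u with
c(u \<otimes> w) = g_k w \<otimes> u for all w is spanned by the x_l with g_l = g_k, and the braid relation
evaluated at x_i \<otimes> u \<otimes> z shows that every g_i preserves V_k. Hence the projections
P_k = basis_projection x (\<lambda>l. g l = g k) onto V_k along the remaining x_l commute with the g_i,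
and the vectors P_k y_j are common eigenvectors lying in V_k that span V. Any basis chosen
among them diagonalizes c.\<close>

lemma ordered_basis_nonzero: "ordered_basis x \<Longrightarrow> x m \<noteq> 0"
  unfolding ordered_basis_def using vec.dependent_zero[of "range x"] by (metis rangeI)

lemma ordered_basis_subspace_eq_UNIV:
  fixes x :: "'n::finite \<Rightarrow> complex^'n"
  assumes "ordered_basis x" "vec.subspace S" "\<And>m. x m \<in> S"
  shows "S = UNIV"
proof -
  have "vec.span (range x) \<subseteq> S" using assms(2,3) by (intro vec.span_minimal) auto
  with assms(1) show ?thesis unfolding ordered_basis_def by auto
qed

lemma ordered_basis_expansion:
  fixes x :: "'n::finite \<Rightarrow> complex^'n"
  assumes "ordered_basis x"
  obtains a where "v = (\<Sum>m\<in>UNIV. a m *s x m)"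
proof -
  have "v \<in> vec.span (range x)" using assms unfolding ordered_basis_def by auto
  then obtain c where "v = (\<Sum>u\<in>range x. c u *s u)"
    using vec.span_finite[of "range x"] by auto
  moreover have "inj x" using assms unfolding ordered_basis_def by auto
  ultimately show thesis by (intro that[of "c \<circ> x"]) (simp add: sum.reindex)
qed

lemma ordered_basis_coeff_eq_0:
  fixes x :: "'n::finite \<Rightarrow> complex^'n"
  assumes "ordered_basis x" "(\<Sum>m\<in>UNIV. a m *s x m) = 0"
  shows "a m = 0"
proof -
  have inj: "inj x" and indep: "vec.independent (range x)"
    using assms(1) unfolding ordered_basis_def by auto
  have "(\<Sum>v\<in>range x. (a \<circ> inv x) v *s v) = 0"
    using assms(2) inj by (simp add: sum.reindex)
  then have "(a \<circ> inv x) (x m) = 0" using indep unfolding vec.independent_explicit by blast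
  then show ?thesis using inj by simp
qed

lemma ordered_basis_matrix_exists:
  fixes x :: "'n::finite \<Rightarrow> complex^'n"
  assumes "ordered_basis x"
  obtains M :: "complex^'n^'n" where "\<And>m. M *v x m = f m"
proof -
  have inj: "inj x" and indep: "vec.independent (range x)"
    using assms unfolding ordered_basis_def by auto
  let ?F = "vec.construct (range x) (\<lambda>v. f (inv x v))"
  have "matrix ?F *v x m = ?F (x m)" for m
    using matrix_works[OF vec.linear_construct[OF indep]] .
  also have "?F (x m) = f m" for m
    using vec.construct_basis[OF indep, of "x m" "\<lambda>v. f (inv x v)"] inj by simp
  finally show thesis by (rule that)
qed

lemma ordered_basis_matrix_eq:
  fixes x :: "'n::finite \<Rightarrow> complex^'n" and A B :: "complex^'n^'n"
  assumes "ordered_basis x" "\<And>m. A *v x m = B *v x m"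
  shows "A = B"
proof -
  have "vec.subspace {v. A *v v = B *v v}"
    by (auto simp: vec.subspace_def matrix_vector_right_distrib vec.scale)
  then have "{v. A *v v = B *v v} = UNIV"
    using ordered_basis_subspace_eq_UNIV[OF assms(1)] assms(2) by blast
  then show ?thesis by (auto simp: matrix_eq)
qed

lemma ordered_basis_diagonal_matrix:
  fixes x :: "'n::finite \<Rightarrow> complex^'n"
  assumes "ordered_basis x" "\<And>m. d m \<noteq> 0"
  obtains M :: "complex^'n^'n" where "invertible M" "\<And>m. M *v x m = d m *s x m"
proof -
  obtain M :: "complex^'n^'n" where M: "\<And>m. M *v x m = d m *s x m"
    using ordered_basis_matrix_exists[OF assms(1), of "\<lambda>m. d m *s x m"] by blast
  obtain N :: "complex^'n^'n" where N: "\<And>m. N *v x m = inverse (d m) *s x m"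
    using ordered_basis_matrix_exists[OF assms(1), of "\<lambda>m. inverse (d m) *s x m"] by blast
  have "M ** N = mat 1"
    by (rule ordered_basis_matrix_eq[OF assms(1)])
      (simp add: matrix_vector_mul_assoc[symmetric] M N vec.scale assms(2))
  then show thesis using M invertible_right_inverse that by blast
qed

lemma ordered_basis_from_spanning_set:
  assumes "vec.span W = (UNIV :: (complex^'n::finite) set)"
  obtains b :: "'n \<Rightarrow> complex^'n" where "ordered_basis b" "range b \<subseteq> W"
proof -
  obtain B where B: "B \<subseteq> W" "vec.independent B" "W \<subseteq> vec.span B"
    using vec.maximal_independent_subset[of W] by blast
  have span: "vec.span B = UNIV"
    using vec.span_mono[OF B(3)] assms by (auto simp: vec.span_span)
  have "card B = CARD('n)"
    using vec.basis_card_eq_dim[of B UNIV] B(2) span by (simp add: card_cart_basis)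
  then obtain b where "bij_betw b (UNIV :: 'n set) B"
    using finite_same_card_bij[of "UNIV :: 'n set" B] vec.finiteI_independent[OF B(2)] by auto
  then have "inj b" "range b = B" by (auto simp: bij_betw_def)
  then show thesis using that B span unfolding ordered_basis_def by auto
qed

lemma tensor_add_left: "tensor (a + b) c = tensor a c + tensor b c"
  and tensor_add_right: "tensor c (a + b) = tensor c a + tensor c b"
  and tensor_diff_left: "tensor (a - b) c = tensor a c - tensor b c"
  and tensor_scale_left: "tensor (t *s a) c = t *s tensor a c"
  and tensor_scale_right: "tensor c (t *s a) = t *s tensor c a"
  by (simp_all add: tensor_def vec_eq_iff algebra_simps)

lemma tensor_0_left [simp]: "tensor 0 c = 0"
  and tensor_0_right [simp]: "tensor c 0 = 0"
  by (simp_all add: tensor_def vec_eq_iff)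

lemma tensor_eq_0_iff: "tensor a b = 0 \<longleftrightarrow> a = 0 \<or> b = 0"
proof
  assume ab: "tensor a b = 0"
  show "a = 0 \<or> b = 0"
  proof (rule ccontr)
    assume "\<not> (a = 0 \<or> b = 0)"
    then obtain p q where "a $ p \<noteq> 0" "b $ q \<noteq> 0" by (metis vec_eq_iff zero_index)
    moreover have "tensor a b $ (p, q) = 0" using ab by simp
    ultimately show False by (simp add: tensor_def)
  qed
qed auto

lemma tensor_sum_left: "tensor (\<Sum>m\<in>S. f m) c = (\<Sum>m\<in>S. tensor (f m) c)"
  by (induction S rule: infinite_finite_induct) (simp_all add: tensor_add_left)

lemma tensor_sum_right: "tensor c (\<Sum>m\<in>S. f m) = (\<Sum>m\<in>S. tensor c (f m))"
  by (induction S rule: infinite_finite_induct) (simp_all add: tensor_add_right)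

lemma tensor_eq_imp_proportional:
  assumes "tensor a b = tensor c d" "b \<noteq> 0"
  obtains t where "a = t *s c"
proof -
  obtain q where q: "b $ q \<noteq> 0" using assms(2) by (metis vec_eq_iff zero_index)
  have "a $ p * b $ q = c $ p * d $ q" for p
    using arg_cong[OF assms(1), of "\<lambda>T. T $ (p, q)"] by (simp add: tensor_def)
  then have "a = (d $ q / b $ q) *s c" using q by (simp add: vec_eq_iff field_simps)
  then show thesis by (rule that)
qed

lemma tensor_basis_sum_eq_0:
  fixes x :: "'n::finite \<Rightarrow> complex^'n"
  assumes "ordered_basis x" "(\<Sum>m\<in>UNIV. tensor (b m) (x m)) = 0"
  shows "b m = 0"
proof -
  have "(\<Sum>m\<in>UNIV. (b m $ p) *s x m) $ q = 0" for p q
    using arg_cong[OF assms(2), of "\<lambda>T. T $ (p, q)"] by (simp add: tensor_def sum_component)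
  then have "(\<Sum>m\<in>UNIV. (b m $ p) *s x m) = 0" for p by (simp add: vec_eq_iff)
  then have "b m $ p = 0" for p
    using ordered_basis_coeff_eq_0[OF assms(1), of "\<lambda>m. b m $ p"] by blast
  then show ?thesis by (simp add: vec_eq_iff)
qed

definition ltensor ::
    "complex^('n::finite\<times>'n) \<Rightarrow> complex^'n \<Rightarrow> complex^('n\<times>'n\<times>'n)" where
  "ltensor T c = (\<chi> p. T $ (fst p, fst (snd p)) * c $ snd (snd p))"

definition rtensor ::
    "complex^'n::finite \<Rightarrow> complex^('n\<times>'n) \<Rightarrow> complex^('n\<times>'n\<times>'n)" where
  "rtensor a T = (\<chi> p. a $ fst p * T $ snd p)"

lemma ltensor_tensor: "ltensor (tensor a b) c = rtensor a (tensor b c)"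
  by (simp add: ltensor_def rtensor_def tensor_def vec_eq_iff mult.assoc)

lemma ltensor_right_cancel:
  assumes "ltensor T c = ltensor T' c" "c \<noteq> 0"
  shows "T = T'"
proof -
  obtain d where d: "c $ d \<noteq> 0" using assms(2) by (metis vec_eq_iff zero_index)
  have "T $ r = T' $ r" for r
    using arg_cong[OF assms(1), of "\<lambda>v. v $ (fst r, snd r, d)"] d by (simp add: ltensor_def)
  then show ?thesis by (simp add: vec_eq_iff)
qed

lemma sum_UNIV_prod: "(\<Sum>q\<in>UNIV. f q) = (\<Sum>a\<in>UNIV. \<Sum>b\<in>UNIV. f (a, b))"
  by (simp add: UNIV_Times_UNIV[symmetric] sum.cartesian_product del: UNIV_Times_UNIV)

lemma if_zero_simps:
  fixes x y :: "'a::semiring_1"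
  shows "(if P then y else 0) * x = (if P then y * x else 0)"
    and "x * (if P then y else 0) = (if P then x * y else 0)"
    and "(\<Sum>i\<in>A. if P then f i else 0) = (if P then sum f A else 0)"
  by simp_all

lemma tensor_id_ltensor: "tensor_id C *v ltensor T c = ltensor (C *v T) c"
  by (simp add: vec_eq_iff matrix_vector_mult_def tensor_id_def ltensor_def sum_UNIV_prod
      if_zero_simps sum_distrib_right mult.assoc cong: if_cong)

lemma id_tensor_rtensor: "id_tensor C *v rtensor a T = rtensor a (C *v T)"
  by (simp add: vec_eq_iff matrix_vector_mult_def id_tensor_def rtensor_def sum_UNIV_prod
      if_zero_simps sum_distrib_left mult.left_commute cong: if_cong)

definition left_braiding_space ::
    "complex^('n::finite\<times>'n)^('n\<times>'n) \<Rightarrow> complex^'n^'n \<Rightarrow> (complex^'n) set" where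
  "left_braiding_space C G = {u. \<forall>w. C *v tensor u w = tensor (G *v w) u}"

lemma subspace_left_braiding_space: "vec.subspace (left_braiding_space C G)"
  and subspace_left_braiding_fibre: "vec.subspace {z. C *v tensor a z = tensor (G *v z) a}"
  and subspace_right_braiding_fibre: "vec.subspace {z. C *v tensor z a = tensor a (G *v z)}"
  by (auto simp: vec.subspace_def left_braiding_space_def tensor_add_left tensor_add_right
      tensor_scale_left tensor_scale_right matrix_vector_right_distrib vec.scale)

lemma diagonal_type_coeff_nonzero:
  fixes C :: "complex^('n::finite\<times>'n)^('n\<times>'n)"
  assumes "invertible C" "ordered_basis x"
    and "\<And>i j. C *v tensor (x i) (x j) = q i j *s tensor (x j) (x i)"
  shows "q i j \<noteq> 0"
proof
  assume "q i j = 0"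
  then have "C *v tensor (x i) (x j) = C *v 0" using assms(3) by simp
  then have "tensor (x i) (x j) = 0" by (rule injD[OF inj_matrix_vector_mult[OF assms(1)]])
  then show False using ordered_basis_nonzero[OF assms(2)] by (simp add: tensor_eq_0_iff)
qed

lemma diagonalizable_imp_left_group_type:
  assumes "invertible C" "diagonalizable_braiding C"
  shows "left_group_type C"
proof -
  obtain x q where x: "ordered_basis x"
    and q: "\<And>i j. C *v tensor (x i) (x j) = q i j *s tensor (x j) (x i)"
    using assms(2) unfolding diagonalizable_braiding_def diagonal_type_wrt_def by blast
  have "\<exists>M. invertible M \<and> (\<forall>m. M *v x m = q i m *s x m)" for i
    using ordered_basis_diagonal_matrix[OF x, of "q i"]
      diagonal_type_coeff_nonzero[OF assms(1) x q] by metis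
  then obtain g :: "_ \<Rightarrow> complex^_^_"
    where g: "\<And>i. invertible (g i)" "\<And>i m. g i *v x m = q i m *s x m" by metis
  have "C *v tensor (x i) z = tensor (g i *v z) (x i)" for i z
    using ordered_basis_subspace_eq_UNIV[OF x subspace_left_braiding_fibre, of C "x i" "g i"]
    by (auto simp: q g(2) tensor_scale_left)
  then show ?thesis unfolding left_group_type_def using x g(1) by blast
qed

lemma diagonalizable_imp_right_group_type:
  assumes "invertible C" "diagonalizable_braiding C"
  shows "right_group_type C"
proof -
  obtain x q where x: "ordered_basis x"
    and q: "\<And>i j. C *v tensor (x i) (x j) = q i j *s tensor (x j) (x i)"
    using assms(2) unfolding diagonalizable_braiding_def diagonal_type_wrt_def by blast
  have "\<exists>M. invertible M \<and> (\<forall>m. M *v x m = q m j *s x m)" for j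
    using ordered_basis_diagonal_matrix[OF x, of "\<lambda>m. q m j"]
      diagonal_type_coeff_nonzero[OF assms(1) x q] by metis
  then obtain g :: "_ \<Rightarrow> complex^_^_"
    where g: "\<And>j. invertible (g j)" "\<And>j m. g j *v x m = q m j *s x m" by metis
  have "C *v tensor z (x j) = tensor (x j) (g j *v z)" for j z
    using ordered_basis_subspace_eq_UNIV[OF x subspace_right_braiding_fibre, of C "x j" "g j"]
    by (auto simp: q g(2) tensor_scale_right)
  then show ?thesis unfolding right_group_type_def using x g(1) by blast
qed

lemma left_right_group_type_common_eigenvectors:
  fixes C :: "complex^('n::finite\<times>'n)^('n\<times>'n)"
  assumes "ordered_basis x"
    and "\<And>i z. C *v tensor (x i) z = tensor (g i *v z) (x i)"
    and "\<And>j z. C *v tensor z (y j) = tensor (y j) (h j *v z)"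
  obtains lam where "\<And>i j. g i *v y j = lam i j *s y j"
proof -
  have "\<exists>t. g i *v y j = t *s y j" for i j
  proof -
    have "tensor (g i *v y j) (x i) = C *v tensor (x i) (y j)" using assms(2) by simp
    also have "\<dots> = tensor (y j) (h j *v x i)" using assms(3) by simp
    finally show ?thesis
      using ordered_basis_nonzero[OF assms(1)] by (metis tensor_eq_imp_proportional)
  qed
  then show thesis using that by metis
qed

lemma common_eigenbasis_commute:
  fixes y :: "'n::finite \<Rightarrow> complex^'n"
  assumes "ordered_basis y" "\<And>i j. A i *v y j = lam i j *s y j"
  shows "A i ** A k = A k ** A i"
  by (rule ordered_basis_matrix_eq[OF assms(1)])
    (simp add: matrix_vector_mul_assoc[symmetric] assms(2) vec.scale)

lemma subspace_matrix_vimage: "vec.subspace S \<Longrightarrow> vec.subspace {v. M *v v \<in> S}"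
  by (auto simp: vec.subspace_def matrix_vector_right_distrib vec.scale)

definition basis_projection ::
    "('n::finite \<Rightarrow> complex^'n) \<Rightarrow> ('n \<Rightarrow> bool) \<Rightarrow> complex^'n^'n" where
  "basis_projection x S = (SOME M. \<forall>m. M *v x m = (if S m then x m else 0))"

lemma basis_projection_basis:
  assumes "ordered_basis x"
  shows "basis_projection x S *v x m = (if S m then x m else 0)"
proof -
  have "\<exists>M. \<forall>m. M *v x m = (if S m then x m else 0)"
    using ordered_basis_matrix_exists[OF assms, of "\<lambda>m. if S m then x m else 0"] by blast
  from someI_ex[OF this] show ?thesis unfolding basis_projection_def by blast
qed

context
  fixes C :: "complex^('n::finite\<times>'n)^('n\<times>'n)"
    and x :: "'n \<Rightarrow> complex^'n" and g :: "'n \<Rightarrow> complex^'n^'n"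
  assumes braided: "braided C"
    and x_basis: "ordered_basis x"
    and g_invertible: "\<And>i. invertible (g i)"
    and left_braiding: "\<And>i z. C *v tensor (x i) z = tensor (g i *v z) (x i)"
    and g_commute: "\<And>i k. g i ** g k = g k ** g i"
begin

text \<open>Both sides of the braid relation, evaluated at x_i \<otimes> u \<otimes> z.\<close>

lemma braid_relation_at_basis:
  assumes u: "u \<in> left_braiding_space C (g k)"
  shows "C *v tensor (g i *v u) (g i *v z) = tensor (g k *v (g i *v z)) (g i *v u)"
proof -
  let ?A = "tensor_id C" and ?B = "id_tensor C"
  have u': "C *v tensor u w = tensor (g k *v w) u" for w
    using u unfolding left_braiding_space_def by blast
  have "?A *v ltensor (tensor (x i) u) z = rtensor (g i *v u) (tensor (x i) z)"
    by (subst tensor_id_ltensor) (simp add: left_braiding ltensor_tensor)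
  moreover have "?B *v rtensor (g i *v u) (tensor (x i) z)
      = ltensor (tensor (g i *v u) (g i *v z)) (x i)"
    by (subst id_tensor_rtensor) (simp add: left_braiding ltensor_tensor)
  ultimately have lhs: "(?A ** ?B ** ?A) *v ltensor (tensor (x i) u) z
      = ltensor (C *v tensor (g i *v u) (g i *v z)) (x i)"
    by (simp add: matrix_vector_mul_assoc[symmetric] tensor_id_ltensor)
  have "?B *v rtensor (x i) (tensor u z) = ltensor (tensor (x i) (g k *v z)) u"
    by (subst id_tensor_rtensor) (simp add: u' ltensor_tensor)
  moreover have "?A *v ltensor (tensor (x i) (g k *v z)) u
      = rtensor (g i *v (g k *v z)) (tensor (x i) u)"
    by (subst tensor_id_ltensor) (simp add: left_braiding ltensor_tensor)
  moreover have "?B *v rtensor (g i *v (g k *v z)) (tensor (x i) u)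
      = ltensor (tensor (g i *v (g k *v z)) (g i *v u)) (x i)"
    by (subst id_tensor_rtensor) (simp add: left_braiding ltensor_tensor)
  ultimately have rhs: "(?B ** ?A ** ?B) *v ltensor (tensor (x i) u) z
      = ltensor (tensor (g i *v (g k *v z)) (g i *v u)) (x i)"
    by (simp add: matrix_vector_mul_assoc[symmetric] ltensor_tensor)
  have "?A ** ?B ** ?A = ?B ** ?A ** ?B" using braided unfolding braided_def by blast
  then have "C *v tensor (g i *v u) (g i *v z) = tensor (g i *v (g k *v z)) (g i *v u)"
    using lhs rhs ltensor_right_cancel ordered_basis_nonzero[OF x_basis] by metis
  then show ?thesis by (simp add: matrix_vector_mul_assoc g_commute)
qed

lemma left_braiding_space_invariant:
  assumes "u \<in> left_braiding_space C (g k)"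
  shows "g i *v u \<in> left_braiding_space C (g k)"
proof -
  obtain G where G: "g i ** G = mat 1"
    using g_invertible invertible_right_inverse by blast
  have "C *v tensor (g i *v u) w = tensor (g k *v w) (g i *v u)" for w
    using braid_relation_at_basis[OF assms, of i "G *v w"]
    by (simp add: matrix_vector_mul_assoc G)
  then show ?thesis unfolding left_braiding_space_def by blast
qed

lemma left_braiding_space_coeff:
  assumes "u \<in> left_braiding_space C G" "u = (\<Sum>l\<in>UNIV. a l *s x l)" "a l \<noteq> 0"
  shows "g l = G"
proof -
  have "g l *v w = G *v w" for w
  proof -
    have "(\<Sum>l\<in>UNIV. tensor (a l *s (g l *v w - G *v w)) (x l))
        = C *v tensor u w - tensor (G *v w) u"
      by (simp add: assms(2) tensor_sum_left tensor_sum_right tensor_scale_left tensor_scale_right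
          tensor_diff_left vector_ssub_ldistrib vec.sum vec.scale left_braiding sum_subtractf)
    also have "\<dots> = 0" using assms(1) unfolding left_braiding_space_def by simp
    finally have "a l *s (g l *v w - G *v w) = 0"
      by (rule tensor_basis_sum_eq_0[OF x_basis])
    then show ?thesis using assms(3) by simp
  qed
  then show ?thesis by (simp add: matrix_eq)
qed

lemma basis_projection_left_braiding_space:
  assumes "u \<in> left_braiding_space C (g m)"
  shows "basis_projection x (\<lambda>l. g l = g k) *v u = (if g m = g k then u else 0)"
proof -
  obtain a where u: "u = (\<Sum>l\<in>UNIV. a l *s x l)" using ordered_basis_expansion[OF x_basis] .
  have "basis_projection x (\<lambda>l. g l = g k) *v u
      = (\<Sum>l\<in>UNIV. a l *s (if g l = g k then x l else 0))"
    by (simp add: u vec.sum vec.scale basis_projection_basis[OF x_basis])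
  also have "\<dots> = (\<Sum>l\<in>UNIV. a l *s (if g m = g k then x l else 0))"
    using left_braiding_space_coeff[OF assms u] by (intro sum.cong refl) (metis vector_smult_lzero)
  also have "\<dots> = (if g m = g k then u else 0)" by (simp add: u)
  finally show ?thesis .
qed

lemma basis_in_left_braiding_space: "x m \<in> left_braiding_space C (g m)"
  by (simp add: left_braiding_space_def left_braiding)

lemma basis_projection_commute:
  "g i ** basis_projection x (\<lambda>l. g l = g k) = basis_projection x (\<lambda>l. g l = g k) ** g i"
proof (rule ordered_basis_matrix_eq[OF x_basis])
  fix m
  have "g i *v x m \<in> left_braiding_space C (g m)"
    by (rule left_braiding_space_invariant[OF basis_in_left_braiding_space])
  then show "(g i ** basis_projection x (\<lambda>l. g l = g k)) *v x m
      = (basis_projection x (\<lambda>l. g l = g k) ** g i) *v x m"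
    by (simp add: matrix_vector_mul_assoc[symmetric] basis_projection_left_braiding_space
        basis_projection_basis[OF x_basis])
qed

lemma basis_projection_range:
  "basis_projection x (\<lambda>l. g l = g k) *v v \<in> left_braiding_space C (g k)"
proof -
  have "vec.subspace {v. basis_projection x (\<lambda>l. g l = g k) *v v \<in> left_braiding_space C (g k)}"
    by (rule subspace_matrix_vimage[OF subspace_left_braiding_space])
  moreover have "basis_projection x (\<lambda>l. g l = g k) *v x m \<in> left_braiding_space C (g k)" for m
    using basis_in_left_braiding_space[of m] subspace_left_braiding_space[of C "g k"]
    by (auto simp: basis_projection_basis[OF x_basis] vec.subspace_0)
  ultimately show ?thesis using ordered_basis_subspace_eq_UNIV[OF x_basis] by blast
qed

lemma span_basis_projections:
  assumes "ordered_basis y"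
  shows "vec.span (range (\<lambda>(k, j). basis_projection x (\<lambda>l. g l = g k) *v y j)) = UNIV"
    (is "vec.span ?W = UNIV")
proof (rule ordered_basis_subspace_eq_UNIV[OF x_basis vec.subspace_span])
  fix k
  have "{v. basis_projection x (\<lambda>l. g l = g k) *v v \<in> vec.span ?W} = UNIV"
  proof (rule ordered_basis_subspace_eq_UNIV[OF assms])
    show "vec.subspace {v. basis_projection x (\<lambda>l. g l = g k) *v v \<in> vec.span ?W}"
      by (rule subspace_matrix_vimage[OF vec.subspace_span])
    show "y j \<in> {v. basis_projection x (\<lambda>l. g l = g k) *v v \<in> vec.span ?W}" for j
      by (auto intro!: vec.span_base image_eqI[where x = "(k, j)"])
  qed
  then have "basis_projection x (\<lambda>l. g l = g k) *v x k \<in> vec.span ?W" by blast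
  then show "x k \<in> vec.span ?W" by (simp add: basis_projection_basis[OF x_basis])
qed

lemma diagonalizable_if_common_eigenbasis:
  assumes y: "ordered_basis y" and lam: "\<And>i j. g i *v y j = lam i j *s y j"
  shows "diagonalizable_braiding C"
proof -
  define w where "w = (\<lambda>(k, j). basis_projection x (\<lambda>l. g l = g k) *v y j)"
  have w_eigen: "g i *v w (k, j) = lam i j *s w (k, j)" for i k j
    by (simp add: w_def matrix_vector_mul_assoc basis_projection_commute)
      (simp add: matrix_vector_mul_assoc[symmetric] lam vec.scale)
  have w_diag: "C *v tensor (w p) (w p') = lam (fst p) (snd p') *s tensor (w p') (w p)" for p p'
  proof -
    have "w p \<in> left_braiding_space C (g (fst p))"
      by (simp add: w_def case_prod_beta basis_projection_range)
    then have "C *v tensor (w p) (w p') = tensor (g (fst p) *v w p') (w p)"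
      unfolding left_braiding_space_def by blast
    then show ?thesis using w_eigen[of "fst p" "fst p'" "snd p'"] by (simp add: tensor_scale_left)
  qed
  obtain b where b: "ordered_basis b" "range b \<subseteq> range w"
    by (rule ordered_basis_from_spanning_set[OF span_basis_projections[OF y, folded w_def]])
  have "\<forall>i. \<exists>p. b i = w p" using b(2) by blast
  then obtain \<pi> where \<pi>: "\<And>i. b i = w (\<pi> i)" by metis
  have "diagonal_type_wrt C b"
    unfolding diagonal_type_wrt_def \<pi>
    by (rule exI[of _ "\<lambda>i j. lam (fst (\<pi> i)) (snd (\<pi> j))"]) (simp add: w_diag)
  then show ?thesis unfolding diagonalizable_braiding_def using b(1) by blast
qed

end

theorem lemma3p2:
  fixes C :: "complex^('n::finite\<times>'n)^('n\<times>'n)"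
  assumes "braided C"
  shows "(left_group_type C \<and> right_group_type C) \<longleftrightarrow> diagonalizable_braiding C"
proof
  assume "left_group_type C \<and> right_group_type C"
  then obtain x y :: "'n \<Rightarrow> complex^'n" and g h :: "'n \<Rightarrow> complex^'n^'n"
    where x: "ordered_basis x" and g: "\<And>i. invertible (g i)"
      and left: "\<And>i z. C *v tensor (x i) z = tensor (g i *v z) (x i)"
      and y: "ordered_basis y" and right: "\<And>j z. C *v tensor z (y j) = tensor (y j) (h j *v z)"
    unfolding left_group_type_def right_group_type_def by blast
  obtain lam where lam: "\<And>i j. g i *v y j = lam i j *s y j"
    using left_right_group_type_common_eigenvectors[where y = y, OF x left right] by blast
  have "g i ** g k = g k ** g i" for i k by (rule common_eigenbasis_commute[OF y lam])
  then show "diagonalizable_braiding C"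
    using diagonalizable_if_common_eigenbasis[OF assms x g left _ y lam] by blast
next
  assume "diagonalizable_braiding C"
  moreover have "invertible C" using assms unfolding braided_def by blast
  ultimately show "left_group_type C \<and> right_group_type C"
    using diagonalizable_imp_left_group_type diagonalizable_imp_right_group_type by blast
qed

end
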